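(* Let $\mathcal{E}$ be a finite-dimensional real vector space with norm $\|\cdot\|_{\mathcal{E}}$, $X\subseteq\mathcal{E}$ a closed convex set, $h:X\to\mathbb{R}$ convex, and $d$ a prox-function on $X$ (as in the context) with subgradient selection $d'$ on $X^0$. Let $\bar x\in X^0$, $g\in\mathcal{E}^*$, $\gamma>0$, $\delta_{pc}>0$, $\delta_{pu}>0$, and let $\tilde x\in X^0$ be such that there exists $p\in\partial h(\tilde x)$ with $$\Big\langle g+\tfrac{1}{\gamma}\big[d'(\tilde x)-d'(\bar x)\big]+p,\;u-\tilde x\Big\rangle\ge-\delta_{pc}-\delta_{pu}\quad\forall u\in X.$$ Set $g_X:=\frac{1}{\gamma}(\bar x-\tilde x)$. Then $$\gamma\langle g,g_X\rangle\ge\gamma\|g_X\|_{\mathcal{E}}^2+\big(h(\tilde x)-h(\bar x)\big)-\delta_{pc}-\delta_{pu}.$$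
   Context: A prox-function $d$ on $X$ is a continuous convex function on $X$ which admits a selection of subgradients $d'(x)$ continuous in $x\in X^0$, where $X^0\subseteq X$ is the set of points at which $d'(x)$ exists, and which is $1$-strongly convex w.r.t. $\|\cdot\|_{\mathcal{E}}$: $d(y)-d(x)-\langle d'(x),y-x\rangle\ge\frac12\|y-x\|_{\mathcal{E}}^2$ for all $x\in X^0$, $y\in X$. $\langle g,x\rangle$ is the value of $g\in\mathcal{E}^*$ at $x\in\mathcal{E}$. *)

theory Defs
  imports "HOL-Analysis.Analysis"
begin

text \<open>The finite-dimensional space E is a type of class euclidean_space; it carries an
  arbitrary norm nE (not necessarily the Euclidean one).  The dual space E* is identified
  with E via the inner product: g in E* acts by x |-> g \<bullet> x (every linear functional on a
  finite-dimensional space has this form).\<close>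

definition is_norm :: "('a::real_vector \<Rightarrow> real) \<Rightarrow> bool" where
  "is_norm nE \<longleftrightarrow>
     (\<forall>x. 0 \<le> nE x) \<and> (\<forall>x. nE x = 0 \<longleftrightarrow> x = 0) \<and>
     (\<forall>c x. nE (c *\<^sub>R x) = \<bar>c\<bar> * nE x) \<and> (\<forall>x y. nE (x + y) \<le> nE x + nE y)"

definition subdiff :: "('a::real_inner \<Rightarrow> real) \<Rightarrow> 'a set \<Rightarrow> 'a \<Rightarrow> 'a set" where
  "subdiff h X x = {p. \<forall>y\<in>X. h y \<ge> h x + p \<bullet> (y - x)}"

definition prox_function ::
  "('a::euclidean_space \<Rightarrow> real) \<Rightarrow> 'a set \<Rightarrow> ('a \<Rightarrow> real) \<Rightarrow> ('a \<Rightarrow> 'a) \<Rightarrow> 'a set \<Rightarrow> bool" where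
  "prox_function nE X d d' X0 \<longleftrightarrow>
     continuous_on X d \<and> convex_on X d \<and>
     X0 = {x\<in>X. subdiff d X x \<noteq> {}} \<and>
     (\<forall>x\<in>X0. d' x \<in> subdiff d X x) \<and>
     continuous_on X0 d' \<and>
     (\<forall>x\<in>X0. \<forall>y\<in>X. d y - d x - d' x \<bullet> (y - x) \<ge> (1/2) * (nE (y - x))\<^sup>2)"

end

theory Submission
  imports Defs
begin

text \<open>Adding the strong convexity inequalities of d at xt and at xbar makes the subgradient
  selection d' strongly monotone: (d' xt - d' xbar) \<bullet> (xt - xbar) \<ge> nE (xt - xbar)^2.
  Testing the approximate optimality condition with u = xbar, the prox term therefore
  contributes at least nE (xbar - xt)^2 / \<gamma>, and the subgradient p of h contributes
  at most h xbar - h xt; rescaling by \<gamma> gives the claim.\<close>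

lemma is_norm_scaleR:
  assumes "is_norm nE"
  shows "nE (c *\<^sub>R x) = \<bar>c\<bar> * nE x"
  using assms unfolding is_norm_def by blast

lemma is_norm_minus_commute:
  assumes "is_norm nE"
  shows "nE (x - y) = nE (y - x)"
  using is_norm_scaleR[OF assms, of "-1" "x - y"] by simp

lemma prox_function_domain_subset:
  assumes "prox_function nE X d d' X0"
  shows "X0 \<subseteq> X"
  using assms unfolding prox_function_def by auto

lemma prox_function_strongly_convex:
  assumes "prox_function nE X d d' X0" and "x \<in> X0" and "y \<in> X"
  shows "d y - d x - d' x \<bullet> (y - x) \<ge> (1/2) * (nE (y - x))\<^sup>2"
  using assms unfolding prox_function_def by blast

lemma prox_function_gradient_strongly_monotone:
  assumes norm: "is_norm nE" and pf: "prox_function nE X d d' X0"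
    and x: "x \<in> X0" and y: "y \<in> X0"
  shows "(d' x - d' y) \<bullet> (x - y) \<ge> (nE (x - y))\<^sup>2"
proof -
  have "x \<in> X" "y \<in> X" using prox_function_domain_subset[OF pf] x y by auto
  then have "d y - d x - d' x \<bullet> (y - x) \<ge> (1/2) * (nE (x - y))\<^sup>2"
    and "d x - d y - d' y \<bullet> (x - y) \<ge> (1/2) * (nE (x - y))\<^sup>2"
    using prox_function_strongly_convex[OF pf x, of y] prox_function_strongly_convex[OF pf y, of x]
      is_norm_minus_commute[OF norm, of y x]
    by simp_all
  then show ?thesis
    by (simp add: inner_diff_left inner_diff_right algebra_simps)
qed

theorem lemma2:
  fixes nE :: "'a::euclidean_space \<Rightarrow> real"
    and X X0 :: "'a set" and h d :: "'a \<Rightarrow> real" and d' :: "'a \<Rightarrow> 'a"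
    and xbar xt g :: 'a and \<gamma> \<delta>pc \<delta>pu :: real
  assumes "is_norm nE"
    and "closed X" and "convex X"
    and "convex_on X h"
    and "prox_function nE X d d' X0"
    and "xbar \<in> X0" and "\<gamma> > 0" and "\<delta>pc > 0" and "\<delta>pu > 0"
    and "xt \<in> X0"
    and "\<exists>p\<in>subdiff h X xt. \<forall>u\<in>X.
           (g + (1/\<gamma>) *\<^sub>R (d' xt - d' xbar) + p) \<bullet> (u - xt) \<ge> - \<delta>pc - \<delta>pu"
  shows "\<gamma> * (g \<bullet> ((1/\<gamma>) *\<^sub>R (xbar - xt)))
           \<ge> \<gamma> * (nE ((1/\<gamma>) *\<^sub>R (xbar - xt)))\<^sup>2 + (h xt - h xbar) - \<delta>pc - \<delta>pu"
proof -
  define N where "N = nE (xbar - xt)"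
  have xbar: "xbar \<in> X" using prox_function_domain_subset[OF assms(5)] assms(6) by auto
  obtain p where "p \<in> subdiff h X xt"
    and opt: "(g + (1/\<gamma>) *\<^sub>R (d' xt - d' xbar) + p) \<bullet> (xbar - xt) \<ge> - \<delta>pc - \<delta>pu"
    using assms(11) xbar by blast
  then have subgrad: "p \<bullet> (xbar - xt) \<le> h xbar - h xt"
    using xbar unfolding subdiff_def by auto
  have "(d' xt - d' xbar) \<bullet> (xbar - xt) \<le> - N\<^sup>2"
  proof -
    have "(d' xt - d' xbar) \<bullet> (xbar - xt) = - ((d' xt - d' xbar) \<bullet> (xt - xbar))"
      by (simp add: inner_diff_right)
    then show ?thesis
      using prox_function_gradient_strongly_monotone[OF assms(1,5,10,6)]
        is_norm_minus_commute[OF assms(1), of xt xbar]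
      by (simp add: N_def)
  qed
  then have "(1/\<gamma>) * ((d' xt - d' xbar) \<bullet> (xbar - xt)) \<le> - N\<^sup>2 / \<gamma>"
    using assms(7) by (metis divide_right_mono less_imp_le minus_divide_left mult.commute
      times_divide_eq_right mult_1_right)
  then have "g \<bullet> (xbar - xt) \<ge> N\<^sup>2 / \<gamma> + (h xt - h xbar) - \<delta>pc - \<delta>pu"
    using opt subgrad by (simp add: inner_add_left)
  moreover have "nE ((1/\<gamma>) *\<^sub>R (xbar - xt)) = N / \<gamma>"
    using is_norm_scaleR[OF assms(1)] assms(7) by (simp add: N_def)
  ultimately show ?thesis
    using assms(7) by (simp add: power2_eq_square)
qed

end
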